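(* Let $k$ be a field. Every nondegenerate variety of representations of groups over $k$ is an IBN-variety.
   Context: A representation of a group over $k$ is a two-sorted algebra ($\Gamma=\{1,2\}$): sort 1 is a group $G$ (operations: multiplication, inverse, constant $1$), sort 2 is a $k$-vector space $V$ (operations $+,0,-$ and a unary scalar multiplication by each $\lambda\in k$), and there is an action $\circ$ of type $(1,2;2)$ satisfying $g\circ(u+v)=g\circ u+g\circ v$, $g\circ(\lambda v)=\lambda(g\circ v)$, $(gh)\circ v=g\circ(h\circ v)$, $1\circ v=v$. A variety of representations of groups is a class of such representations defined by (two-sorted) identities. A two-sorted variety is nondegenerate if neither $x^{(1)}_1=x^{(1)}_2$ nor $x^{(2)}_1=x^{(2)}_2$ is an identity of it. It is an IBN-variety if for any free algebras $F(Y),F(Z)$ of the variety with finite free generating sets $Y=Y^{(1)}\uplus Y^{(2)}$, $Z=Z^{(1)}\uplus Z^{(2)}$ (split by sort), $F(Y)\cong F(Z)$ implies $|Y^{(1)}|=|Z^{(1)}|$ and $|Y^{(2)}|=|Z^{(2)}|$. *)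

theory Defs
  imports Main
begin

text \<open>Terms of sort 1 (group words) and of sort 2 (vector terms).  Variables are
  indexed by natural numbers: GV i is the sort-1 variable x_i^(1), VV i the
  sort-2 variable x_i^(2).  Scalar multiplication by lambda is the unary operation VSc lambda.\<close>

datatype gt = GV nat | GOne | GMul gt gt | GInv gt

datatype 'k vt = VV nat | VZero | VAdd "'k vt" "'k vt" | VNeg "'k vt"
  | VSc 'k "'k vt" | VAct gt "'k vt"

datatype 'k ident = GEq gt gt | VEq "'k vt" "'k vt"

record ('g, 'v, 'k) rep_struct =
  gcar :: "'g set"
  gmul :: "'g \<Rightarrow> 'g \<Rightarrow> 'g"
  ginv :: "'g \<Rightarrow> 'g"
  gone :: "'g"
  vcar :: "'v set"
  vadd :: "'v \<Rightarrow> 'v \<Rightarrow> 'v"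
  vzero :: "'v"
  vneg :: "'v \<Rightarrow> 'v"
  vsc :: "'k \<Rightarrow> 'v \<Rightarrow> 'v"
  act :: "'g \<Rightarrow> 'v \<Rightarrow> 'v"

primrec geval :: "('g, 'v, 'k) rep_struct \<Rightarrow> (nat \<Rightarrow> 'g) \<Rightarrow> gt \<Rightarrow> 'g" where
  "geval A \<sigma> (GV i) = \<sigma> i"
| "geval A \<sigma> GOne = gone A"
| "geval A \<sigma> (GMul s t) = gmul A (geval A \<sigma> s) (geval A \<sigma> t)"
| "geval A \<sigma> (GInv s) = ginv A (geval A \<sigma> s)"

primrec veval :: "('g, 'v, 'k) rep_struct \<Rightarrow> (nat \<Rightarrow> 'g) \<Rightarrow> (nat \<Rightarrow> 'v) \<Rightarrow> 'k vt \<Rightarrow> 'v" where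
  "veval A \<sigma> \<tau> (VV i) = \<tau> i"
| "veval A \<sigma> \<tau> VZero = vzero A"
| "veval A \<sigma> \<tau> (VAdd s t) = vadd A (veval A \<sigma> \<tau> s) (veval A \<sigma> \<tau> t)"
| "veval A \<sigma> \<tau> (VNeg s) = vneg A (veval A \<sigma> \<tau> s)"
| "veval A \<sigma> \<tau> (VSc c s) = vsc A c (veval A \<sigma> \<tau> s)"
| "veval A \<sigma> \<tau> (VAct g s) = act A (geval A \<sigma> g) (veval A \<sigma> \<tau> s)"

primrec sat :: "('g, 'v, 'k) rep_struct \<Rightarrow> 'k ident \<Rightarrow> bool" where
  "sat A (GEq s t) = (\<forall>(\<sigma>::nat \<Rightarrow> 'g) (\<tau>::nat \<Rightarrow> 'v). (\<forall>i. \<sigma> i \<in> gcar A) \<longrightarrow> (\<forall>i. \<tau> i \<in> vcar A) \<longrightarrow>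
       geval A \<sigma> s = geval A \<sigma> t)"
| "sat A (VEq s t) = (\<forall>\<sigma> \<tau>. (\<forall>i. \<sigma> i \<in> gcar A) \<longrightarrow> (\<forall>i. \<tau> i \<in> vcar A) \<longrightarrow>
       veval A \<sigma> \<tau> s = veval A \<sigma> \<tau> t)"

definition closed_struct :: "('g, 'v, 'k) rep_struct \<Rightarrow> bool" where
  "closed_struct A \<longleftrightarrow>
     (\<forall>x\<in>gcar A. \<forall>y\<in>gcar A. gmul A x y \<in> gcar A) \<and>
     (\<forall>x\<in>gcar A. ginv A x \<in> gcar A) \<and> gone A \<in> gcar A \<and>
     (\<forall>u\<in>vcar A. \<forall>v\<in>vcar A. vadd A u v \<in> vcar A) \<and>
     (\<forall>u\<in>vcar A. vneg A u \<in> vcar A) \<and> vzero A \<in> vcar A \<and>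
     (\<forall>c. \<forall>u\<in>vcar A. vsc A c u \<in> vcar A) \<and>
     (\<forall>x\<in>gcar A. \<forall>u\<in>vcar A. act A x u \<in> vcar A)"

definition base_ids :: "'k::field ident set" where
  "base_ids =
    (let x = GV 0; y = GV 1; z = GV 2; u = VV 0; v = VV 1; w = VV 2 in
     {GEq (GMul (GMul x y) z) (GMul x (GMul y z)),
      GEq (GMul GOne x) x,
      GEq (GMul x GOne) x,
      GEq (GMul (GInv x) x) GOne,
      GEq (GMul x (GInv x)) GOne,
      VEq (VAdd (VAdd u v) w) (VAdd u (VAdd v w)),
      VEq (VAdd u v) (VAdd v u),
      VEq (VAdd VZero u) u,
      VEq (VAdd (VNeg u) u) VZero,
      VEq (VSc 1 u) u,
      VEq (VAct x (VAdd u v)) (VAdd (VAct x u) (VAct x v)),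
      VEq (VAct (GMul x y) u) (VAct x (VAct y u)),
      VEq (VAct GOne u) u}
     \<union> (\<Union>c. \<Union>d.
         {VEq (VSc c (VAdd u v)) (VAdd (VSc c u) (VSc c v)),
          VEq (VSc (c + d) u) (VAdd (VSc c u) (VSc d u)),
          VEq (VSc (c * d) u) (VSc c (VSc d u)),
          VEq (VAct x (VSc c u)) (VSc c (VAct x u))}))"

definition is_rep :: "('g, 'v, 'k::field) rep_struct \<Rightarrow> bool" where
  "is_rep A \<longleftrightarrow> closed_struct A \<and> (\<forall>e\<in>base_ids. sat A e)"

definition in_variety :: "'k::field ident set \<Rightarrow> ('g, 'v, 'k) rep_struct \<Rightarrow> bool" where
  "in_variety E A \<longleftrightarrow> is_rep A \<and> (\<forall>e\<in>E. sat A e)"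

primrec gsubst :: "(nat \<Rightarrow> gt) \<Rightarrow> gt \<Rightarrow> gt" where
  "gsubst \<sigma> (GV i) = \<sigma> i"
| "gsubst \<sigma> GOne = GOne"
| "gsubst \<sigma> (GMul s t) = GMul (gsubst \<sigma> s) (gsubst \<sigma> t)"
| "gsubst \<sigma> (GInv s) = GInv (gsubst \<sigma> s)"

primrec vsubst :: "(nat \<Rightarrow> gt) \<Rightarrow> (nat \<Rightarrow> 'k vt) \<Rightarrow> 'k vt \<Rightarrow> 'k vt" where
  "vsubst \<sigma> \<tau> (VV i) = \<tau> i"
| "vsubst \<sigma> \<tau> VZero = VZero"
| "vsubst \<sigma> \<tau> (VAdd s t) = VAdd (vsubst \<sigma> \<tau> s) (vsubst \<sigma> \<tau> t)"
| "vsubst \<sigma> \<tau> (VNeg s) = VNeg (vsubst \<sigma> \<tau> s)"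
| "vsubst \<sigma> \<tau> (VSc c s) = VSc c (vsubst \<sigma> \<tau> s)"
| "vsubst \<sigma> \<tau> (VAct g s) = VAct (gsubst \<sigma> g) (vsubst \<sigma> \<tau> s)"

primrec gvars :: "gt \<Rightarrow> nat set" where
  "gvars (GV i) = {i}"
| "gvars GOne = {}"
| "gvars (GMul s t) = gvars s \<union> gvars t"
| "gvars (GInv s) = gvars s"

primrec vgvars :: "'k vt \<Rightarrow> nat set" where
  "vgvars (VV i) = {}"
| "vgvars VZero = {}"
| "vgvars (VAdd s t) = vgvars s \<union> vgvars t"
| "vgvars (VNeg s) = vgvars s"
| "vgvars (VSc c s) = vgvars s"
| "vgvars (VAct g s) = gvars g \<union> vgvars s"

primrec vvvars :: "'k vt \<Rightarrow> nat set" where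
  "vvvars (VV i) = {i}"
| "vvvars VZero = {}"
| "vvvars (VAdd s t) = vvvars s \<union> vvvars t"
| "vvvars (VNeg s) = vvvars s"
| "vvvars (VSc c s) = vvvars s"
| "vvvars (VAct g s) = vvvars s"

inductive gder :: "'k::field ident set \<Rightarrow> gt \<Rightarrow> gt \<Rightarrow> bool"
  and vder :: "'k::field ident set \<Rightarrow> 'k vt \<Rightarrow> 'k vt \<Rightarrow> bool"
  for E :: "'k ident set" where
  g_ax: "GEq l r \<in> E \<union> base_ids \<Longrightarrow> gder E (gsubst \<sigma> l) (gsubst \<sigma> r)"
| g_refl: "gder E t t"
| g_sym: "gder E s t \<Longrightarrow> gder E t s"
| g_trans: "gder E s t \<Longrightarrow> gder E t r \<Longrightarrow> gder E s r"
| g_mul: "gder E s s' \<Longrightarrow> gder E t t' \<Longrightarrow> gder E (GMul s t) (GMul s' t')"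
| g_inv: "gder E s s' \<Longrightarrow> gder E (GInv s) (GInv s')"
| v_ax: "VEq l r \<in> E \<union> base_ids \<Longrightarrow> vder E (vsubst \<sigma> \<tau> l) (vsubst \<sigma> \<tau> r)"
| v_refl: "vder E t t"
| v_sym: "vder E s t \<Longrightarrow> vder E t s"
| v_trans: "vder E s t \<Longrightarrow> vder E t r \<Longrightarrow> vder E s r"
| v_add: "vder E s s' \<Longrightarrow> vder E t t' \<Longrightarrow> vder E (VAdd s t) (VAdd s' t')"
| v_neg: "vder E s s' \<Longrightarrow> vder E (VNeg s) (VNeg s')"
| v_sc: "vder E s s' \<Longrightarrow> vder E (VSc c s) (VSc c s')"
| v_act: "gder E g g' \<Longrightarrow> vder E s s' \<Longrightarrow> vder E (VAct g s) (VAct g' s')"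

definition gcls :: "'k::field ident set \<Rightarrow> gt \<Rightarrow> gt set" where
  "gcls E t = {s. gder E t s}"

definition vcls :: "'k::field ident set \<Rightarrow> 'k vt \<Rightarrow> 'k vt set" where
  "vcls E t = {s. vder E t s}"

text \<open>The free algebra F(Y) of the variety defined by E, with free generating set
  Y = Y^(1) \<uplus> Y^(2), Y^(1) = {x_0^(1),...,x_(m-1)^(1)}, Y^(2) = {x_0^(2),...,x_(n-1)^(2)}:
  terms in these variables modulo equational consequence.\<close>
definition free_rep :: "'k::field ident set \<Rightarrow> nat \<Rightarrow> nat \<Rightarrow> (gt set, 'k vt set, 'k) rep_struct" where
  "free_rep E m n =
    \<lparr> gcar = gcls E ` {t. gvars t \<subseteq> {..<m}},
      gmul = (\<lambda>X Y. gcls E (GMul (SOME t. t \<in> X) (SOME t. t \<in> Y))),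
      ginv = (\<lambda>X. gcls E (GInv (SOME t. t \<in> X))),
      gone = gcls E GOne,
      vcar = vcls E ` {t. vgvars t \<subseteq> {..<m} \<and> vvvars t \<subseteq> {..<n}},
      vadd = (\<lambda>U V. vcls E (VAdd (SOME t. t \<in> U) (SOME t. t \<in> V))),
      vzero = vcls E VZero,
      vneg = (\<lambda>U. vcls E (VNeg (SOME t. t \<in> U))),
      vsc = (\<lambda>c U. vcls E (VSc c (SOME t. t \<in> U))),
      act = (\<lambda>X U. vcls E (VAct (SOME t. t \<in> X) (SOME t. t \<in> U))) \<rparr>"

definition rep_iso :: "('g1, 'v1, 'k) rep_struct \<Rightarrow> ('g2, 'v2, 'k) rep_struct \<Rightarrow> bool" where
  "rep_iso A B \<longleftrightarrow> (\<exists>f h.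
     bij_betw f (gcar A) (gcar B) \<and> bij_betw h (vcar A) (vcar B) \<and>
     (\<forall>x\<in>gcar A. \<forall>y\<in>gcar A. f (gmul A x y) = gmul B (f x) (f y)) \<and>
     (\<forall>x\<in>gcar A. f (ginv A x) = ginv B (f x)) \<and>
     f (gone A) = gone B \<and>
     (\<forall>u\<in>vcar A. \<forall>v\<in>vcar A. h (vadd A u v) = vadd B (h u) (h v)) \<and>
     (\<forall>u\<in>vcar A. h (vneg A u) = vneg B (h u)) \<and>
     h (vzero A) = vzero B \<and>
     (\<forall>c. \<forall>u\<in>vcar A. h (vsc A c u) = vsc B c (h u)) \<and>
     (\<forall>x\<in>gcar A. \<forall>u\<in>vcar A. h (act A x u) = act B (f x) (h u)))"

end

theory Submission
  imports
    Defs "HOL-Algebra.Multiplicative_Group" "HOL-Library.Function_Algebras" "HOL.Vector_Spaces"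
begin

(* An algebra of the variety with a group element g of order N > 1 (put N = 2 if g has infinite
   order) shows, by substituting g for one group variable and 1 for the others, that every
   identity of the variety preserves the exponent sum of each group variable modulo N.
   Likewise a nonzero vector v shows that every vector identity preserves the coefficient of each
   vector variable.  Consequently a homomorphism from the group sort of F(Y) to Z/N, and an
   action-invariant linear functional on its vector sort, may take arbitrary values on the
   generators and is determined by them.  Pulling these back along an isomorphism
   F(Y) -> F(Z) yields an injection of (Z/N)^|Z1| into (Z/N)^|Y1| and a linear injection of
   k^|Z2| into k^|Y2|; together with the inverse isomorphism this forces |Y1| = |Z1| and
   |Y2| = |Z2|. *)

section \<open>Finitely supported sequences\<close>

definition vanishing_from :: "nat \<Rightarrow> (nat \<Rightarrow> 'k::zero) set" where
  "vanishing_from n = {a. \<forall>i\<ge>n. a i = 0}"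

lemma sum_apply: "sum f A x = (\<Sum>a\<in>A. f a x)"
  by (induction A rule: infinite_finite_induct) auto

interpretation fun_vector_space: vector_space "\<lambda>(c::'k::field) (a::'i \<Rightarrow> 'k) i. c * a i"
  by unfold_locales (auto simp: algebra_simps fun_eq_iff)

definition unit_vector :: "'i \<Rightarrow> 'i \<Rightarrow> 'k::field" where
  "unit_vector j = (\<lambda>i. of_bool (i = j))"

lemma independent_unit_vectors:
  "fun_vector_space.independent (unit_vector ` S :: ('i \<Rightarrow> 'k::field) set)"
  unfolding fun_vector_space.independent_explicit_module
proof (intro allI impI)
  fix T u v
  assume T: "finite T" "T \<subseteq> unit_vector ` S" "(\<Sum>w\<in>T. (\<lambda>i. u w * w i)) = (0 :: 'i \<Rightarrow> 'k)"
    and "v \<in> T"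
  then obtain j where j: "v = unit_vector j"
    by auto
  have others: "w j = 0" if "w \<in> T" "w \<noteq> v" for w
    using that T(2) j by (auto simp: unit_vector_def)
  have "(\<Sum>w\<in>T. u w * w j) = u v * v j"
    using T(1) \<open>v \<in> T\<close> by (subst sum.remove) (auto intro!: sum.neutral simp: others)
  moreover have "(\<Sum>w\<in>T. u w * w j) = 0"
    using fun_cong[OF T(3), of j] by (simp add: sum_apply)
  ultimately show "u v = 0"
    by (simp add: j unit_vector_def)
qed

lemma vanishing_from_subset_span:
  "vanishing_from n \<subseteq> fun_vector_space.span (unit_vector ` {..<n} :: (nat \<Rightarrow> 'k::field) set)"
proof
  fix a :: "nat \<Rightarrow> 'k"
  assume "a \<in> vanishing_from n"
  then have "a i = (\<Sum>j<n. a j * unit_vector j i)" for i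
    by (cases "i < n") (auto simp: vanishing_from_def unit_vector_def)
  then have "a = (\<lambda>i. \<Sum>j<n. a j * unit_vector j i)"
    by (rule ext)
  also have "\<dots> = (\<Sum>j<n. (\<lambda>i. a j * unit_vector j i))"
    by (simp add: sum_apply fun_eq_iff)
  also have "\<dots> \<in> fun_vector_space.span (unit_vector ` {..<n})"
    by (intro fun_vector_space.span_sum fun_vector_space.span_scale fun_vector_space.span_base) auto
  finally show "a \<in> fun_vector_space.span (unit_vector ` {..<n})" .
qed

lemma span_unit_vectors:
  "fun_vector_space.span (unit_vector ` {..<n}) = (vanishing_from n :: (nat \<Rightarrow> 'k::field) set)"
proof
  show "fun_vector_space.span (unit_vector ` {..<n}) \<subseteq> vanishing_from n"
    by (intro fun_vector_space.span_minimal)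
      (auto simp: fun_vector_space.subspace_def vanishing_from_def unit_vector_def)
qed (rule vanishing_from_subset_span)

lemma linear_inj_on_vanishing_from_le:
  fixes J :: "(nat \<Rightarrow> 'k::field) \<Rightarrow> nat \<Rightarrow> 'k"
  assumes add: "\<And>a b. J (a + b) = J a + J b" and scale: "\<And>c a. J (\<lambda>i. c * a i) = (\<lambda>i. c * J a i)"
    and inj: "inj_on J (vanishing_from p)" and range: "J ` vanishing_from p \<subseteq> vanishing_from q"
  shows "p \<le> q"
proof -
  interpret J: Vector_Spaces.linear "\<lambda>c a i. c * a i" "\<lambda>c a i. c * a i" J
    by (simp add: Vector_Spaces.linear_iff fun_vector_space.vector_space_axioms add scale)
  have inj_units: "inj_on J (fun_vector_space.span (unit_vector ` {..<p}))"
    using inj by (simp add: span_unit_vectors)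
  have "fun_vector_space.independent (J ` unit_vector ` {..<p})"
    by (rule J.independent_injective_image[OF independent_unit_vectors inj_units])
  moreover have "J ` unit_vector ` {..<p} \<subseteq> fun_vector_space.span (unit_vector ` {..<q})"
    using range fun_vector_space.span_superset[of "unit_vector ` {..<p}"]
    by (auto simp: span_unit_vectors)
  ultimately have "card (J ` unit_vector ` {..<p}) \<le> card (unit_vector ` {..<q} :: (nat \<Rightarrow> 'k) set)"
    by (simp add: fun_vector_space.independent_span_bound)
  moreover have "inj_on J (unit_vector ` {..<p})"
    by (rule inj_on_subset[OF inj_units fun_vector_space.span_superset])
  moreover have "inj (unit_vector :: nat \<Rightarrow> nat \<Rightarrow> 'k)"
    by (auto simp: inj_def unit_vector_def fun_eq_iff)
  ultimately show ?thesis
    by (simp add: card_image inj_on_subset)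
qed

section \<open>Exponent sums and coefficients of terms\<close>

primrec expsum :: "nat \<Rightarrow> gt \<Rightarrow> int" where
  "expsum i (GV j) = of_bool (i = j)"
| "expsum i GOne = 0"
| "expsum i (GMul s t) = expsum i s + expsum i t"
| "expsum i (GInv s) = - expsum i s"

primrec coef :: "nat \<Rightarrow> 'k::field vt \<Rightarrow> 'k" where
  "coef i (VV j) = of_bool (i = j)"
| "coef i VZero = 0"
| "coef i (VAdd s t) = coef i s + coef i t"
| "coef i (VNeg s) = - coef i s"
| "coef i (VSc c s) = c * coef i s"
| "coef i (VAct g s) = coef i s"

definition expsum_invariant :: "int \<Rightarrow> 'k::field ident set \<Rightarrow> bool" where
  "expsum_invariant N E \<longleftrightarrow>
     (\<forall>l r j. GEq l r \<in> E \<union> base_ids \<longrightarrow> expsum j l mod N = expsum j r mod N)"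

definition coef_invariant :: "'k::field ident set \<Rightarrow> bool" where
  "coef_invariant E \<longleftrightarrow> (\<forall>l r j. VEq l r \<in> E \<union> base_ids \<longrightarrow> coef j l = coef j r)"

lemma finite_gvars: "finite (gvars t)"
  by (induction t) auto

lemma finite_vvvars: "finite (vvvars t)"
  by (induction t) auto

lemma expsum_gsubst:
  assumes "finite S" "gvars t \<subseteq> S"
  shows "expsum i (gsubst \<sigma> t) = (\<Sum>j\<in>S. expsum j t * expsum i (\<sigma> j))"
  using assms(2)
proof (induction t)
  case (GV k)
  then show ?case
    using assms(1) by simp
qed (simp_all add: distrib_right sum.distrib sum_negf)

lemma coef_vsubst:
  assumes "finite S" "vvvars t \<subseteq> S"
  shows "coef i (vsubst \<sigma> \<tau> t) = (\<Sum>j\<in>S. coef j t * coef i (\<tau> j))"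
  using assms(2)
proof (induction t)
  case (VV k)
  then show ?case
    using assms(1) by simp
qed (simp_all add: distrib_right sum.distrib sum_negf sum_distrib_left mult.assoc)

lemma sum_mod_cong:
  "(\<And>x. x \<in> A \<Longrightarrow> f x mod N = g x mod N) \<Longrightarrow> sum f A mod N = sum g A mod (N::int)"
  by (induct A rule: infinite_finite_induct) (auto intro: mod_add_cong)

lemma gder_expsum_mod:
  assumes inv: "expsum_invariant N E" and der: "gder E s t"
  shows "expsum i s mod N = expsum i t mod N"
proof -
  have "\<forall>i. expsum i s mod N = expsum i t mod N"
    using der
  proof (induction rule: gder_vder.inducts(1)[where ?P2.0 = "\<lambda>_ _. True"])
    case (g_ax l r \<sigma>)
    let ?S = "gvars l \<union> gvars r"
    have "expsum j l mod N = expsum j r mod N" for j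
      using g_ax inv unfolding expsum_invariant_def by blast
    then have "(\<Sum>j\<in>?S. expsum j l * expsum i (\<sigma> j)) mod N =
        (\<Sum>j\<in>?S. expsum j r * expsum i (\<sigma> j)) mod N" for i
      by (intro sum_mod_cong mod_mult_cong refl)
    then show ?case
      by (simp add: expsum_gsubst[of ?S] finite_gvars)
  qed (auto intro: mod_add_cong mod_minus_cong)
  then show ?thesis ..
qed

lemma vder_coef:
  assumes inv: "coef_invariant E" and der: "vder E u v"
  shows "coef i u = coef i v"
proof -
  have "\<forall>i. coef i u = coef i v"
    using der
  proof (induction rule: gder_vder.inducts(2)[where ?P1.0 = "\<lambda>_ _. True"])
    case (v_ax l r \<sigma> \<tau>)
    let ?S = "vvvars l \<union> vvvars r"
    have "coef j l = coef j r" for j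
      using v_ax inv unfolding coef_invariant_def by blast
    then show ?case
      by (simp add: coef_vsubst[of ?S] finite_vvvars)
  qed auto
  then show ?thesis ..
qed

context
  fixes E :: "'k::field ident set"
begin

lemma gcls_eq_iff: "gcls E s = gcls E t \<longleftrightarrow> gder E s t"
  unfolding gcls_def by (auto intro: gder_vder.g_refl gder_vder.g_sym gder_vder.g_trans)

lemma vcls_eq_iff: "vcls E s = vcls E t \<longleftrightarrow> vder E s t"
  unfolding vcls_def by (auto intro: gder_vder.v_refl gder_vder.v_sym gder_vder.v_trans)

lemma gder_some_gcls: "gder E (SOME x. x \<in> gcls E s) s"
proof -
  have "s \<in> gcls E s"
    by (simp add: gcls_def gder_vder.g_refl)
  then have "(SOME x. x \<in> gcls E s) \<in> gcls E s"
    by (rule someI)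
  then show ?thesis
    by (simp add: gcls_def gder_vder.g_sym)
qed

lemma vder_some_vcls: "vder E (SOME x. x \<in> vcls E s) s"
proof -
  have "s \<in> vcls E s"
    by (simp add: vcls_def gder_vder.v_refl)
  then have "(SOME x. x \<in> vcls E s) \<in> vcls E s"
    by (rule someI)
  then show ?thesis
    by (simp add: vcls_def gder_vder.v_sym)
qed

lemma free_rep_gcar: "gcar (free_rep E m n) = gcls E ` {t. gvars t \<subseteq> {..<m}}"
  and free_rep_vcar:
    "vcar (free_rep E m n) = vcls E ` {t. vgvars t \<subseteq> {..<m} \<and> vvvars t \<subseteq> {..<n}}"
  and free_rep_gone: "gone (free_rep E m n) = gcls E GOne"
  and free_rep_vzero: "vzero (free_rep E m n) = vcls E VZero"
  by (simp_all add: free_rep_def)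

lemma free_rep_gmul: "gmul (free_rep E m n) (gcls E s) (gcls E t) = gcls E (GMul s t)"
  and free_rep_ginv: "ginv (free_rep E m n) (gcls E s) = gcls E (GInv s)"
  and free_rep_vadd: "vadd (free_rep E m n) (vcls E u) (vcls E v) = vcls E (VAdd u v)"
  and free_rep_vneg: "vneg (free_rep E m n) (vcls E u) = vcls E (VNeg u)"
  and free_rep_vsc: "vsc (free_rep E m n) c (vcls E u) = vcls E (VSc c u)"
  and free_rep_act: "act (free_rep E m n) (gcls E s) (vcls E u) = vcls E (VAct s u)"
  by (simp_all add: free_rep_def gcls_eq_iff vcls_eq_iff gder_some_gcls vder_some_vcls
      gder_vder.g_mul gder_vder.g_inv gder_vder.v_add gder_vder.v_neg gder_vder.v_sc
      gder_vder.v_act)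

lemmas free_rep_simps = free_rep_gcar free_rep_vcar free_rep_gone free_rep_vzero
  free_rep_gmul free_rep_ginv free_rep_vadd free_rep_vneg free_rep_vsc free_rep_act

lemma closed_struct_free_rep: "closed_struct (free_rep E m n)"
  unfolding closed_struct_def free_rep_gcar free_rep_vcar
  by (auto simp: free_rep_simps intro!: image_eqI)

end

section \<open>Characters of free algebras\<close>

definition rep_isomorphism ::
    "('g1, 'v1, 'k) rep_struct \<Rightarrow> ('g2, 'v2, 'k) rep_struct \<Rightarrow> ('g1 \<Rightarrow> 'g2) \<Rightarrow> ('v1 \<Rightarrow> 'v2) \<Rightarrow> bool"
  where "rep_isomorphism A B f h \<longleftrightarrow>
     bij_betw f (gcar A) (gcar B) \<and> bij_betw h (vcar A) (vcar B) \<and>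
     (\<forall>x\<in>gcar A. \<forall>y\<in>gcar A. f (gmul A x y) = gmul B (f x) (f y)) \<and>
     (\<forall>x\<in>gcar A. f (ginv A x) = ginv B (f x)) \<and>
     f (gone A) = gone B \<and>
     (\<forall>u\<in>vcar A. \<forall>v\<in>vcar A. h (vadd A u v) = vadd B (h u) (h v)) \<and>
     (\<forall>u\<in>vcar A. h (vneg A u) = vneg B (h u)) \<and>
     h (vzero A) = vzero B \<and>
     (\<forall>c. \<forall>u\<in>vcar A. h (vsc A c u) = vsc B c (h u)) \<and>
     (\<forall>x\<in>gcar A. \<forall>u\<in>vcar A. h (act A x u) = act B (f x) (h u))"

lemma rep_iso_iff_rep_isomorphism: "rep_iso A B \<longleftrightarrow> (\<exists>f h. rep_isomorphism A B f h)"
  unfolding rep_iso_def rep_isomorphism_def ..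

lemma rep_isomorphism_inv:
  assumes closed: "closed_struct A" and iso: "rep_isomorphism A B f h"
  shows "rep_isomorphism B A (inv_into (gcar A) f) (inv_into (vcar A) h)"
proof -
  let ?f' = "inv_into (gcar A) f" and ?h' = "inv_into (vcar A) h"
  have fb: "bij_betw f (gcar A) (gcar B)" and hb: "bij_betw h (vcar A) (vcar B)"
    using iso by (simp_all add: rep_isomorphism_def)
  have f'_in: "?f' x \<in> gcar A" and f_f': "f (?f' x) = x" if "x \<in> gcar B" for x
    using that fb by (auto simp: bij_betw_def inv_into_into f_inv_into_f)
  have h'_in: "?h' u \<in> vcar A" and h_h': "h (?h' u) = u" if "u \<in> vcar B" for u
    using that hb by (auto simp: bij_betw_def inv_into_into f_inv_into_f)
  have f'_eq: "?f' y = x" if "x \<in> gcar A" "f x = y" for x y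
    using that fb by (simp add: bij_betw_def inv_into_f_eq)
  have h'_eq: "?h' v = u" if "u \<in> vcar A" "h u = v" for u v
    using that hb by (simp add: bij_betw_def inv_into_f_eq)
  show ?thesis
    unfolding rep_isomorphism_def
    using iso closed
    by (auto simp: rep_isomorphism_def closed_struct_def bij_betw_inv_into fb hb
        f'_in h'_in f_f' h_h' intro!: f'_eq h'_eq)
qed

lemma rep_iso_sym: "closed_struct A \<Longrightarrow> rep_iso A B \<Longrightarrow> rep_iso B A"
  by (meson rep_iso_iff_rep_isomorphism rep_isomorphism_inv)

lemma rep_isomorphism_image:
  assumes "rep_isomorphism A B f h"
  shows "f ` gcar A = gcar B" and "h ` vcar A = vcar B"
  using assms by (simp_all add: rep_isomorphism_def bij_betw_def)

text \<open>Homomorphisms to Z/N, with residues represented by integers.\<close>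

definition mod_characters :: "int \<Rightarrow> ('g, 'v, 'k) rep_struct \<Rightarrow> ('g \<Rightarrow> int) set" where
  "mod_characters N A = {\<phi>.
     (\<forall>x\<in>gcar A. \<forall>y\<in>gcar A. \<phi> (gmul A x y) mod N = (\<phi> x + \<phi> y) mod N) \<and>
     (\<forall>x\<in>gcar A. \<phi> (ginv A x) mod N = - \<phi> x mod N) \<and> \<phi> (gone A) mod N = 0}"

definition invariant_functionals :: "('g, 'v, 'k::field) rep_struct \<Rightarrow> ('v \<Rightarrow> 'k) set" where
  "invariant_functionals A = {\<phi>.
     (\<forall>u\<in>vcar A. \<forall>v\<in>vcar A. \<phi> (vadd A u v) = \<phi> u + \<phi> v) \<and>
     (\<forall>u\<in>vcar A. \<phi> (vneg A u) = - \<phi> u) \<and> \<phi> (vzero A) = 0 \<and>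
     (\<forall>c. \<forall>u\<in>vcar A. \<phi> (vsc A c u) = c * \<phi> u) \<and>
     (\<forall>x\<in>gcar A. \<forall>u\<in>vcar A. \<phi> (act A x u) = \<phi> u)}"

lemma mod_characters_pullback:
  "rep_isomorphism A B f h \<Longrightarrow> \<phi> \<in> mod_characters N B \<Longrightarrow> \<phi> \<circ> f \<in> mod_characters N A"
  by (auto simp: rep_isomorphism_def mod_characters_def bij_betw_apply)

lemma invariant_functionals_pullback:
  "rep_isomorphism A B f h \<Longrightarrow> \<phi> \<in> invariant_functionals B \<Longrightarrow> \<phi> \<circ> h \<in> invariant_functionals A"
  by (auto simp: rep_isomorphism_def invariant_functionals_def bij_betw_apply)

context
  fixes E :: "'k::field ident set"
begin

lemma gcls_in_free_rep: "gvars t \<subseteq> {..<m} \<Longrightarrow> gcls E t \<in> gcar (free_rep E m n)"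
  by (simp add: free_rep_gcar)

lemma vcls_in_free_rep:
  "vgvars t \<subseteq> {..<m} \<Longrightarrow> vvvars t \<subseteq> {..<n} \<Longrightarrow> vcls E t \<in> vcar (free_rep E m n)"
  by (simp add: free_rep_vcar)

lemma mod_character_free_rep:
  assumes \<phi>: "\<phi> \<in> mod_characters N (free_rep E m n)" and "gvars t \<subseteq> {..<m}"
  shows "\<phi> (gcls E t) mod N = (\<Sum>i<m. expsum i t * \<phi> (gcls E (GV i))) mod N"
  using assms(2)
proof (induction t)
  case GOne
  then show ?case
    using \<phi> by (simp add: mod_characters_def free_rep_gone)
next
  case (GMul s t)
  have "\<phi> (gcls E (GMul s t)) mod N = (\<phi> (gcls E s) + \<phi> (gcls E t)) mod N"
    using \<phi> GMul.prems
    by (simp add: mod_characters_def gcls_in_free_rep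
        free_rep_gmul[where m = m and n = n, symmetric])
  also have "\<dots> = ((\<Sum>i<m. expsum i s * \<phi> (gcls E (GV i))) +
      (\<Sum>i<m. expsum i t * \<phi> (gcls E (GV i)))) mod N"
    using GMul by (intro mod_add_cong) auto
  finally show ?case
    by (simp add: distrib_right sum.distrib)
next
  case (GInv s)
  have "\<phi> (gcls E (GInv s)) mod N = - \<phi> (gcls E s) mod N"
    using \<phi> GInv.prems
    by (simp add: mod_characters_def gcls_in_free_rep
        free_rep_ginv[where m = m and n = n, symmetric])
  also have "\<dots> = - (\<Sum>i<m. expsum i s * \<phi> (gcls E (GV i))) mod N"
    using GInv by (intro mod_minus_cong) auto
  finally show ?case
    by (simp add: sum_negf)
qed simp

lemma invariant_functional_free_rep:
  assumes \<phi>: "\<phi> \<in> invariant_functionals (free_rep E m n)"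
    and "vgvars t \<subseteq> {..<m}" "vvvars t \<subseteq> {..<n}"
  shows "\<phi> (vcls E t) = (\<Sum>i<n. coef i t * \<phi> (vcls E (VV i)))"
  using assms(2,3)
proof (induction t)
  case VZero
  then show ?case
    using \<phi> by (simp add: invariant_functionals_def free_rep_vzero)
next
  case (VAdd s t)
  then show ?case
    using \<phi> by (simp add: invariant_functionals_def vcls_in_free_rep
        free_rep_vadd[where m = m and n = n, symmetric]
        distrib_right sum.distrib)
next
  case (VNeg s)
  then show ?case
    using \<phi> by (simp add: invariant_functionals_def vcls_in_free_rep
        free_rep_vneg[where m = m and n = n, symmetric]
        sum_negf)
next
  case (VSc c s)
  then show ?case
    using \<phi> by (simp add: invariant_functionals_def vcls_in_free_rep
        free_rep_vsc[where m = m and n = n, symmetric]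
        sum_distrib_left mult.assoc)
next
  case (VAct g s)
  then show ?case
    using \<phi> by (simp add: invariant_functionals_def vcls_in_free_rep gcls_in_free_rep
        free_rep_act[where m = m and n = n, symmetric])
qed simp

end

definition expsum_char :: "int \<Rightarrow> nat \<Rightarrow> (nat \<Rightarrow> int) \<Rightarrow> gt set \<Rightarrow> int" where
  "expsum_char N m a X = (\<Sum>i<m. a i * expsum i (SOME t. t \<in> X)) mod N"

definition coef_functional :: "nat \<Rightarrow> (nat \<Rightarrow> 'k::field) \<Rightarrow> 'k vt set \<Rightarrow> 'k" where
  "coef_functional n a U = (\<Sum>i<n. a i * coef i (SOME t. t \<in> U))"

lemma expsum_char_gcls:
  assumes "expsum_invariant N E"
  shows "expsum_char N m a (gcls E s) = (\<Sum>i<m. a i * expsum i s) mod N"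
  unfolding expsum_char_def
  using gder_expsum_mod[OF assms gder_some_gcls] by (intro sum_mod_cong mod_mult_cong) auto

lemma coef_functional_vcls:
  "coef_invariant E \<Longrightarrow> coef_functional n a (vcls E u) = (\<Sum>i<n. a i * coef i u)"
  unfolding coef_functional_def by (simp add: vder_coef[OF _ vder_some_vcls])

lemma expsum_char_GV:
  "expsum_invariant N E \<Longrightarrow> j < m \<Longrightarrow> expsum_char N m a (gcls E (GV j)) = a j mod N"
  by (simp add: expsum_char_gcls)

lemma coef_functional_VV:
  "coef_invariant E \<Longrightarrow> j < n \<Longrightarrow> coef_functional n a (vcls E (VV j)) = a j"
  by (simp add: coef_functional_vcls)

lemma expsum_char_mod_characters:
  assumes "expsum_invariant N E"
  shows "expsum_char N m' a \<in> mod_characters N (free_rep E m n)"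
  unfolding mod_characters_def
  by (auto simp: free_rep_simps expsum_char_gcls[OF assms] distrib_left sum.distrib sum_negf
      mod_add_eq mod_minus_eq)

lemma coef_functional_invariant_functionals:
  assumes "coef_invariant E"
  shows "coef_functional n' a \<in> invariant_functionals (free_rep E m n)"
  unfolding invariant_functionals_def
  by (auto simp: free_rep_simps coef_functional_vcls[OF assms] distrib_left sum.distrib sum_negf
      sum_distrib_left mult.left_commute)

lemma mod_characters_free_rep_eqI:
  assumes \<phi>: "\<phi> \<in> mod_characters N (free_rep E m n)" and \<psi>: "\<psi> \<in> mod_characters N (free_rep E m n)"
    and gens: "\<forall>i<m. \<phi> (gcls E (GV i)) = \<psi> (gcls E (GV i))" and "X \<in> gcar (free_rep E m n)"
  shows "\<phi> X mod N = \<psi> X mod N"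
proof -
  obtain t where t: "gvars t \<subseteq> {..<m}" and X: "X = gcls E t"
    using assms(4) by (auto simp: free_rep_gcar)
  have "\<phi> X mod N = (\<Sum>i<m. expsum i t * \<phi> (gcls E (GV i))) mod N"
    using mod_character_free_rep[OF \<phi> t] X by simp
  also have "\<dots> = (\<Sum>i<m. expsum i t * \<psi> (gcls E (GV i))) mod N"
    using gens by simp
  also have "\<dots> = \<psi> X mod N"
    using mod_character_free_rep[OF \<psi> t] X by simp
  finally show ?thesis .
qed

lemma invariant_functionals_free_rep_eqI:
  assumes \<phi>: "\<phi> \<in> invariant_functionals (free_rep E m n)"
    and \<psi>: "\<psi> \<in> invariant_functionals (free_rep E m n)"
    and gens: "\<forall>i<n. \<phi> (vcls E (VV i)) = \<psi> (vcls E (VV i))" and "U \<in> vcar (free_rep E m n)"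
  shows "\<phi> U = \<psi> U"
proof -
  obtain t where t: "vgvars t \<subseteq> {..<m}" "vvvars t \<subseteq> {..<n}" and U: "U = vcls E t"
    using assms(4) by (auto simp: free_rep_vcar)
  have "\<phi> U = (\<Sum>i<n. coef i t * \<phi> (vcls E (VV i)))"
    using invariant_functional_free_rep[OF \<phi> t] U by simp
  also have "\<dots> = (\<Sum>i<n. coef i t * \<psi> (vcls E (VV i)))"
    using gens by simp
  also have "\<dots> = \<psi> U"
    using invariant_functional_free_rep[OF \<psi> t] U by simp
  finally show ?thesis .
qed

lemma expsum_char_determined_by_pullback:
  assumes inv: "expsum_invariant N E"
    and iso: "rep_isomorphism (free_rep E m1 n1) (free_rep E m2 n2) f h"
    and gens: "\<forall>i<m1.
      expsum_char N m2 a (f (gcls E (GV i))) = expsum_char N m2 b (f (gcls E (GV i)))"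
    and "j < m2"
  shows "a j mod N = b j mod N"
proof -
  let ?\<chi> = "\<lambda>a. expsum_char N m2 a"
  have pullback: "?\<chi> c \<circ> f \<in> mod_characters N (free_rep E m1 n1)" for c
    by (rule mod_characters_pullback[OF iso expsum_char_mod_characters[OF inv]])
  have "(?\<chi> a \<circ> f) X mod N = (?\<chi> b \<circ> f) X mod N" if "X \<in> gcar (free_rep E m1 n1)" for X
    using gens by (intro mod_characters_free_rep_eqI[OF pullback pullback _ that]) simp
  then have "?\<chi> a (f X) = ?\<chi> b (f X)" if "X \<in> gcar (free_rep E m1 n1)" for X
    using that by (simp add: expsum_char_def)
  then have "?\<chi> a Y = ?\<chi> b Y" if "Y \<in> gcar (free_rep E m2 n2)" for Y
    using that rep_isomorphism_image(1)[OF iso, symmetric] by auto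
  then show ?thesis
    using \<open>j < m2\<close> by (simp add: gcls_in_free_rep expsum_char_GV[OF inv, symmetric])
qed

lemma coef_functional_determined_by_pullback:
  assumes inv: "coef_invariant E"
    and iso: "rep_isomorphism (free_rep E m1 n1) (free_rep E m2 n2) f h"
    and gens: "\<forall>i<n1.
      coef_functional n2 a (h (vcls E (VV i))) = coef_functional n2 b (h (vcls E (VV i)))"
    and "j < n2"
  shows "a j = b j"
proof -
  let ?\<kappa> = "\<lambda>a. coef_functional n2 a"
  have pullback: "?\<kappa> c \<circ> h \<in> invariant_functionals (free_rep E m1 n1)" for c
    by (rule invariant_functionals_pullback[OF iso coef_functional_invariant_functionals[OF inv]])
  have "(?\<kappa> a \<circ> h) U = (?\<kappa> b \<circ> h) U" if "U \<in> vcar (free_rep E m1 n1)" for U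
    using gens by (intro invariant_functionals_free_rep_eqI[OF pullback pullback _ that]) simp
  then have "?\<kappa> a V = ?\<kappa> b V" if "V \<in> vcar (free_rep E m2 n2)" for V
    using that rep_isomorphism_image(2)[OF iso, symmetric] by auto
  then show ?thesis
    using \<open>j < n2\<close> by (simp add: vcls_in_free_rep coef_functional_VV[OF inv, symmetric])
qed

lemma free_rep_iso_group_gens_le:
  assumes inv: "expsum_invariant N E" and N: "N \<ge> 2"
    and iso: "rep_iso (free_rep E m1 n1) (free_rep E m2 n2)"
  shows "m2 \<le> m1"
proof -
  obtain f h where fh: "rep_isomorphism (free_rep E m1 n1) (free_rep E m2 n2) f h"
    using iso by (auto simp: rep_iso_iff_rep_isomorphism)
  let ?Z = "\<lambda>m. {..<m} \<rightarrow>\<^sub>E {0..<N}"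
  define J where "J a = (\<lambda>i\<in>{..<m1}. expsum_char N m2 a (f (gcls E (GV i))))" for a
  have "inj_on J (?Z m2)"
  proof (rule inj_onI)
    fix a b
    assume a: "a \<in> ?Z m2" and b: "b \<in> ?Z m2" and Jab: "J a = J b"
    have "expsum_char N m2 a (f (gcls E (GV i))) = expsum_char N m2 b (f (gcls E (GV i)))"
      if "i < m1" for i
      using fun_cong[OF Jab, of i] that by (simp add: J_def)
    then have "a j mod N = b j mod N" if "j < m2" for j
      using expsum_char_determined_by_pullback[OF inv fh _ that] by blast
    moreover have "a j mod N = a j" "b j mod N = b j" if "j < m2" for j
      using a b that by (auto simp: PiE_iff)
    ultimately show "a = b"
      using a b by (intro PiE_ext) auto
  qed
  moreover have "J ` ?Z m2 \<subseteq> ?Z m1"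
    using N by (simp add: J_def expsum_char_def image_subset_iff)
  moreover have "finite (?Z m1)"
    by (intro finite_PiE) auto
  ultimately have "card (?Z m2) \<le> card (?Z m1)"
    by (rule card_inj_on_le)
  then have "nat N ^ m2 \<le> nat N ^ m1"
    by (simp add: card_PiE)
  then show ?thesis
    using N power_le_imp_le_exp[of "nat N" m2 m1] by simp
qed

lemma free_rep_iso_vector_gens_le:
  assumes inv: "coef_invariant E"
    and iso: "rep_iso (free_rep E m1 n1) (free_rep E m2 n2)"
  shows "n2 \<le> n1"
proof -
  obtain f h where fh: "rep_isomorphism (free_rep E m1 n1) (free_rep E m2 n2) f h"
    using iso by (auto simp: rep_iso_iff_rep_isomorphism)
  define J where "J a = (\<lambda>i. if i < n1 then coef_functional n2 a (h (vcls E (VV i))) else 0)" for a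
  have add: "J (a + b) = J a + J b" for a b
    by (simp add: J_def coef_functional_def distrib_right sum.distrib fun_eq_iff)
  have scale: "J (\<lambda>i. c * a i) = (\<lambda>i. c * J a i)" for c a
    by (simp add: J_def coef_functional_def sum_distrib_left mult.assoc fun_eq_iff)
  have "inj_on J (vanishing_from n2)"
  proof (rule inj_onI)
    fix a b
    assume a: "a \<in> vanishing_from n2" and b: "b \<in> vanishing_from n2" and Jab: "J a = J b"
    have "coef_functional n2 a (h (vcls E (VV i))) = coef_functional n2 b (h (vcls E (VV i)))"
      if "i < n1" for i
      using fun_cong[OF Jab, of i] that by (simp add: J_def)
    then have "a j = b j" if "j < n2" for j
      using coef_functional_determined_by_pullback[OF inv fh _ that] by blast
    moreover have "a j = b j" if "\<not> j < n2" for j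
      using a b that by (simp add: vanishing_from_def)
    ultimately show "a = b"
      by blast
  qed
  moreover have "J ` vanishing_from n2 \<subseteq> vanishing_from n1"
    by (auto simp: J_def vanishing_from_def)
  ultimately show ?thesis
    by (rule linear_inj_on_vanishing_from_le[OF add scale])
qed

lemma in_variety_sat: "in_variety E A \<Longrightarrow> e \<in> E \<union> base_ids \<Longrightarrow> sat A e"
  unfolding in_variety_def is_rep_def by blast

lemma in_variety_geval_eq:
  assumes "in_variety E A" "GEq l r \<in> E \<union> base_ids" "\<forall>i. \<sigma> i \<in> gcar A"
  shows "geval A \<sigma> l = geval A \<sigma> r"
proof -
  have "geval A \<sigma> l = geval A \<sigma> r" if "\<forall>i. \<tau> i \<in> vcar A" for \<tau>
    using in_variety_sat[OF assms(1,2)] assms(3) that by auto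
  moreover have "\<forall>i. vzero A \<in> vcar A"
    using assms(1) by (simp add: in_variety_def is_rep_def closed_struct_def)
  ultimately show ?thesis .
qed

lemma in_variety_veval_eq:
  assumes "in_variety E A" "VEq l r \<in> E \<union> base_ids" "\<forall>i. \<sigma> i \<in> gcar A" "\<forall>i. \<tau> i \<in> vcar A"
  shows "veval A \<sigma> \<tau> l = veval A \<sigma> \<tau> r"
  using in_variety_sat[OF assms(1,2)] assms(3,4) by simp

definition group_of :: "('g, 'v, 'k) rep_struct \<Rightarrow> 'g monoid" where
  "group_of A = \<lparr>carrier = gcar A, mult = gmul A, one = gone A\<rparr>"

definition vector_group_of :: "('g, 'v, 'k) rep_struct \<Rightarrow> 'v monoid" where
  "vector_group_of A = \<lparr>carrier = vcar A, mult = vadd A, one = vzero A\<rparr>"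

lemma group_of_simps [simp]:
  "carrier (group_of A) = gcar A" "mult (group_of A) = gmul A" "one (group_of A) = gone A"
  by (simp_all add: group_of_def)

lemma vector_group_of_simps [simp]:
  "carrier (vector_group_of A) = vcar A" "mult (vector_group_of A) = vadd A"
  "one (vector_group_of A) = vzero A"
  by (simp_all add: vector_group_of_def)

locale representation =
  fixes A :: "('g, 'v, 'k::field) rep_struct"
  assumes is_rep: "is_rep A"
begin

lemma closed:
  "x \<in> gcar A \<Longrightarrow> y \<in> gcar A \<Longrightarrow> gmul A x y \<in> gcar A"
  "x \<in> gcar A \<Longrightarrow> ginv A x \<in> gcar A"
  "gone A \<in> gcar A"
  "u \<in> vcar A \<Longrightarrow> v \<in> vcar A \<Longrightarrow> vadd A u v \<in> vcar A"
  "u \<in> vcar A \<Longrightarrow> vneg A u \<in> vcar A"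
  "vzero A \<in> vcar A"
  "u \<in> vcar A \<Longrightarrow> vsc A c u \<in> vcar A"
  "x \<in> gcar A \<Longrightarrow> u \<in> vcar A \<Longrightarrow> act A x u \<in> vcar A"
  using is_rep by (simp_all add: is_rep_def closed_struct_def)

lemma geval_eq:
  "GEq l r \<in> (base_ids :: 'k ident set) \<Longrightarrow> \<forall>i. \<sigma> i \<in> gcar A \<Longrightarrow> geval A \<sigma> l = geval A \<sigma> r"
  using is_rep
  by (intro in_variety_geval_eq[of "{} :: 'k ident set"]) (simp_all add: in_variety_def)

lemma veval_eq:
  "VEq l r \<in> base_ids \<Longrightarrow> \<forall>i. \<sigma> i \<in> gcar A \<Longrightarrow> \<forall>i. \<tau> i \<in> vcar A \<Longrightarrow>
    veval A \<sigma> \<tau> l = veval A \<sigma> \<tau> r"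
  using is_rep
  by (intro in_variety_veval_eq[of "{} :: 'k ident set"]) (simp_all add: in_variety_def)

lemma gmul_assoc:
  "x \<in> gcar A \<Longrightarrow> y \<in> gcar A \<Longrightarrow> z \<in> gcar A \<Longrightarrow> gmul A (gmul A x y) z = gmul A x (gmul A y z)"
  using geval_eq[of "GMul (GMul (GV 0) (GV 1)) (GV 2)" "GMul (GV 0) (GMul (GV 1) (GV 2))"
      "\<lambda>i. if i = 0 then x else if i = 1 then y else z"]
  by (simp add: base_ids_def Let_def)

lemma gone_mul: "x \<in> gcar A \<Longrightarrow> gmul A (gone A) x = x"
  using geval_eq[of "GMul GOne (GV 0)" "GV 0" "\<lambda>_. x"] by (simp add: base_ids_def Let_def)

lemma ginv_mul: "x \<in> gcar A \<Longrightarrow> gmul A (ginv A x) x = gone A"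
  using geval_eq[of "GMul (GInv (GV 0)) (GV 0)" GOne "\<lambda>_. x"] by (simp add: base_ids_def Let_def)

lemma vadd_assoc:
  "u \<in> vcar A \<Longrightarrow> v \<in> vcar A \<Longrightarrow> w \<in> vcar A \<Longrightarrow> vadd A (vadd A u v) w = vadd A u (vadd A v w)"
  using veval_eq[of "VAdd (VAdd (VV 0) (VV 1)) (VV 2)" "VAdd (VV 0) (VAdd (VV 1) (VV 2))"
      "\<lambda>_. gone A" "\<lambda>i. if i = 0 then u else if i = 1 then v else w"]
  by (simp add: base_ids_def Let_def closed)

lemma vadd_comm: "u \<in> vcar A \<Longrightarrow> v \<in> vcar A \<Longrightarrow> vadd A u v = vadd A v u"
  using veval_eq[of "VAdd (VV 0) (VV 1)" "VAdd (VV 1) (VV 0)"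
      "\<lambda>_. gone A" "\<lambda>i. if i = 0 then u else v"]
  by (simp add: base_ids_def Let_def closed)

lemma vzero_add: "u \<in> vcar A \<Longrightarrow> vadd A (vzero A) u = u"
  using veval_eq[of "VAdd VZero (VV 0)" "VV 0" "\<lambda>_. gone A" "\<lambda>_. u"]
  by (simp add: base_ids_def Let_def closed)

lemma vneg_add: "u \<in> vcar A \<Longrightarrow> vadd A (vneg A u) u = vzero A"
  using veval_eq[of "VAdd (VNeg (VV 0)) (VV 0)" VZero "\<lambda>_. gone A" "\<lambda>_. u"]
  by (simp add: base_ids_def Let_def closed)

lemma vsc_one: "u \<in> vcar A \<Longrightarrow> vsc A 1 u = u"
  using veval_eq[of "VSc 1 (VV 0)" "VV 0" "\<lambda>_. gone A" "\<lambda>_. u"]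
  by (simp add: base_ids_def Let_def closed)

lemma vsc_add: "u \<in> vcar A \<Longrightarrow> vsc A (c + d) u = vadd A (vsc A c u) (vsc A d u)"
  using veval_eq[of "VSc (c + d) (VV 0)" "VAdd (VSc c (VV 0)) (VSc d (VV 0))" "\<lambda>_. gone A" "\<lambda>_. u"]
  by (auto simp: base_ids_def Let_def closed)

lemma vsc_mult: "u \<in> vcar A \<Longrightarrow> vsc A (c * d) u = vsc A c (vsc A d u)"
  using veval_eq[of "VSc (c * d) (VV 0)" "VSc c (VSc d (VV 0))" "\<lambda>_. gone A" "\<lambda>_. u"]
  by (auto simp: base_ids_def Let_def closed)

lemma act_gone: "u \<in> vcar A \<Longrightarrow> act A (gone A) u = u"
  using veval_eq[of "VAct GOne (VV 0)" "VV 0" "\<lambda>_. gone A" "\<lambda>_. u"]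
  by (simp add: base_ids_def Let_def closed)

lemma group_group_of: "group (group_of A)"
proof -
  have "\<exists>y\<in>gcar A. gmul A y x = gone A" if "x \<in> gcar A" for x
    using that ginv_mul closed(2) by blast
  then show ?thesis
    unfolding group_of_def by (intro groupI) (simp_all add: closed gmul_assoc gone_mul)
qed

lemma comm_group_vector_group_of: "comm_group (vector_group_of A)"
proof -
  have inv_ex: "\<exists>v\<in>vcar A. vadd A v u = vzero A" if "u \<in> vcar A" for u
    using that vneg_add closed(5) by blast
  show ?thesis
    unfolding vector_group_of_def
  proof (rule comm_groupI, simp_all add: closed vadd_assoc vzero_add inv_ex)
    show "vadd A u v = vadd A v u" if "u \<in> vcar A" "v \<in> vcar A" for u v
      using that by (rule vadd_comm)
  qed
qed

lemma geval_single:
  assumes g: "g \<in> gcar A"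
  shows "geval A (\<lambda>i. if i = j then g else gone A) t = g [^]\<^bsub>group_of A\<^esub> expsum j t"
proof -
  interpret G: group "group_of A"
    by (rule group_group_of)
  have inv: "inv\<^bsub>group_of A\<^esub> x = ginv A x" if "x \<in> gcar A" for x
    using that G.inv_equality[of "ginv A x" x] by (simp add: ginv_mul closed)
  have pow: "g [^]\<^bsub>group_of A\<^esub> (k::int) \<in> gcar A" for k
    using G.int_pow_closed[of g] g by simp
  show ?thesis
    by (induction t) (use g in \<open>simp_all add: G.int_pow_mult G.int_pow_neg inv pow\<close>)
qed

lemma geval_gone: "geval A (\<lambda>_. gone A) t = gone A"
proof -
  interpret G: group "group_of A"
    by (rule group_group_of)
  show ?thesis
    using geval_single[OF closed(3), of 0 t] G.int_pow_one[simplified] by simp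
qed

lemma vsc_zero: "u \<in> vcar A \<Longrightarrow> vsc A 0 u = vzero A"
proof -
  assume u: "u \<in> vcar A"
  interpret V: comm_group "vector_group_of A"
    by (rule comm_group_vector_group_of)
  have "vadd A (vsc A 0 u) (vsc A 0 u) = vsc A 0 u"
    using vsc_add[OF u, of 0 0] by simp
  then show ?thesis
    using V.r_cancel_one[of "vsc A 0 u" "vsc A 0 u"] u by (simp add: closed)
qed

lemma vneg_vsc: "u \<in> vcar A \<Longrightarrow> vneg A (vsc A c u) = vsc A (- c) u"
proof -
  assume u: "u \<in> vcar A"
  interpret V: comm_group "vector_group_of A"
    by (rule comm_group_vector_group_of)
  have "vadd A (vsc A (- c) u) (vsc A c u) = vzero A"
    using vsc_add[OF u, of "- c" c] vsc_zero[OF u] by simp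
  then have "inv\<^bsub>vector_group_of A\<^esub> (vsc A c u) = vsc A (- c) u"
    using V.inv_equality u by (simp add: closed)
  moreover have "inv\<^bsub>vector_group_of A\<^esub> (vsc A c u) = vneg A (vsc A c u)"
    using V.inv_equality vneg_add u by (simp add: closed)
  ultimately show ?thesis
    by simp
qed

lemma vsc_eq_vzero: "u \<in> vcar A \<Longrightarrow> c \<noteq> 0 \<Longrightarrow> vsc A c u = vzero A \<Longrightarrow> u = vzero A"
proof -
  assume u: "u \<in> vcar A" and "c \<noteq> 0" and cu: "vsc A c u = vzero A"
  then have "u = vsc A (inverse c * c) u"
    by (simp add: vsc_one)
  also have "\<dots> = vsc A (inverse c * 0) u"
    using u cu vsc_zero[OF u] by (simp only: vsc_mult)
  finally show "u = vzero A"
    using vsc_zero[OF u] by simp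
qed

lemma vsc_cancel: "u \<in> vcar A \<Longrightarrow> u \<noteq> vzero A \<Longrightarrow> vsc A c u = vsc A d u \<Longrightarrow> c = d"
proof -
  assume u: "u \<in> vcar A" and "u \<noteq> vzero A" and cd: "vsc A c u = vsc A d u"
  have "vsc A (c - d) u = vadd A (vsc A d u) (vsc A (- d) u)"
    using vsc_add[OF u, of c "- d"] cd by simp
  also have "\<dots> = vzero A"
    using vsc_add[OF u, of d "- d", symmetric] vsc_zero[OF u] by simp
  finally show "c = d"
    using vsc_eq_vzero[OF u, of "c - d"] \<open>u \<noteq> vzero A\<close> by auto
qed

lemma veval_single:
  assumes v: "v \<in> vcar A"
  shows "veval A (\<lambda>_. gone A) (\<lambda>i. if i = j then v else vzero A) t = vsc A (coef j t) v"
proof (induction t)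
  case (VV i)
  then show ?case
    using v by (simp add: vsc_one vsc_zero)
next
  case VZero
  then show ?case
    using v by (simp add: vsc_zero)
next
  case (VAdd s t)
  then show ?case
    using v by (simp add: vsc_add)
next
  case (VNeg s)
  then show ?case
    using v by (simp add: vneg_vsc)
next
  case (VSc c s)
  then show ?case
    using v by (simp add: vsc_mult)
next
  case (VAct g s)
  then show ?case
    using v by (simp add: geval_gone act_gone closed)
qed

end

lemma nontrivial_element_if_not_sat:
  assumes "\<not> sat A (GEq (GV 0) (GV 1))"
  obtains g where "g \<in> gcar A" "g \<noteq> gone A"
proof -
  obtain \<sigma> :: "nat \<Rightarrow> _" where "\<forall>i. \<sigma> i \<in> gcar A" "\<sigma> 0 \<noteq> \<sigma> 1"
    using assms by auto
  then show ?thesis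
    using that by metis
qed

lemma nonzero_vector_if_not_sat:
  assumes "\<not> sat A (VEq (VV 0) (VV 1))"
  obtains v where "v \<in> vcar A" "v \<noteq> vzero A"
proof -
  obtain \<tau> :: "nat \<Rightarrow> _" where "\<forall>i. \<tau> i \<in> vcar A" "\<tau> 0 \<noteq> \<tau> 1"
    using assms by auto
  then show ?thesis
    using that by metis
qed

lemma expsum_invariant_if_nontrivial:
  assumes A: "in_variety E A" and g: "g \<in> gcar A" "g \<noteq> gone A"
  obtains N where "N \<ge> 2" "expsum_invariant N E"
proof -
  interpret representation A
    using A by (simp add: representation_def in_variety_def)
  interpret G: group "group_of A"
    by (rule group_group_of)
  \<comment> \<open>Order 0 means infinite order; then exponent sums agree exactly and any modulus works.\<close>
  define N where "N = (if G.ord g = 0 then 2 else int (G.ord g))"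
  have "G.ord g \<noteq> 1"
    using G.ord_eq_1[of g] g by simp
  then have "N \<ge> 2"
    by (auto simp: N_def)
  moreover have "expsum_invariant N E"
    unfolding expsum_invariant_def
  proof (intro allI impI)
    fix l r j
    assume "GEq l r \<in> E \<union> base_ids"
    then have "g [^]\<^bsub>group_of A\<^esub> expsum j l = g [^]\<^bsub>group_of A\<^esub> expsum j r"
      using in_variety_geval_eq[OF A, of l r "\<lambda>i. if i = j then g else gone A"] g
      by (simp add: closed geval_single)
    then have "int (G.ord g) dvd expsum j r - expsum j l"
      using G.int_pow_eq g by simp
    then show "expsum j l mod N = expsum j r mod N"
      by (auto simp: N_def mod_eq_dvd_iff dvd_diff_commute)
  qed
  ultimately show ?thesis
    by (rule that)
qed

lemma coef_invariant_if_nonzero: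
  assumes A: "in_variety E A" and v: "v \<in> vcar A" "v \<noteq> vzero A"
  shows "coef_invariant E"
  unfolding coef_invariant_def
proof (intro allI impI)
  fix l r j
  assume "VEq l r \<in> E \<union> base_ids"
  interpret representation A
    using A by (simp add: representation_def in_variety_def)
  have "vsc A (coef j l) v = vsc A (coef j r) v"
    using in_variety_veval_eq[OF A \<open>VEq l r \<in> E \<union> base_ids\<close>,
        of "\<lambda>_. gone A" "\<lambda>i. if i = j then v else vzero A"] v
    by (simp add: closed veval_single)
  then show "coef j l = coef j r"
    by (rule vsc_cancel[OF v])
qed

theorem mainTheorem20:
  fixes E :: "'k::field ident set"
    and A1 :: "('g1, 'v1, 'k) rep_struct"
    and A2 :: "('g2, 'v2, 'k) rep_struct"
    and m1 n1 m2 n2 :: nat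
  assumes nondeg1: "in_variety E A1" "\<not> sat A1 (GEq (GV 0) (GV 1))"
    and nondeg2: "in_variety E A2" "\<not> sat A2 (VEq (VV 0) (VV 1))"
    and iso: "rep_iso (free_rep E m1 n1) (free_rep E m2 n2)"
  shows "m1 = m2 \<and> n1 = n2"
proof -
  obtain g where "g \<in> gcar A1" "g \<noteq> gone A1"
    using nondeg1(2) by (rule nontrivial_element_if_not_sat)
  then obtain N where N: "N \<ge> 2" "expsum_invariant N E"
    using expsum_invariant_if_nontrivial[OF nondeg1(1)] by blast
  obtain v where "v \<in> vcar A2" "v \<noteq> vzero A2"
    using nondeg2(2) by (rule nonzero_vector_if_not_sat)
  then have coef: "coef_invariant E"
    by (rule coef_invariant_if_nonzero[OF nondeg2(1)])
  have iso': "rep_iso (free_rep E m2 n2) (free_rep E m1 n1)"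
    by (rule rep_iso_sym[OF closed_struct_free_rep iso])
  have "m2 \<le> m1" "m1 \<le> m2"
    using free_rep_iso_group_gens_le[OF N(2,1) iso] free_rep_iso_group_gens_le[OF N(2,1) iso'] .
  moreover have "n2 \<le> n1" "n1 \<le> n2"
    using free_rep_iso_vector_gens_le[OF coef iso] free_rep_iso_vector_gens_le[OF coef iso'] .
  ultimately show ?thesis
    by simp
qed

end
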